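(* Let $R$ be a local ring and $s\in R$ a central element. Then $A\in M_2(R;s)$ is strongly $J$-clean if and only if one of the following holds: (1) $A\in J\big(M_2(R;s)\big)$; (2) $I_2-A\in J\big(M_2(R;s)\big)$; (3) $s\in U(R)$ and $A$ is similar to $\left[\begin{smallmatrix} v&0\\ 0&w\end{smallmatrix}\right]$ for some $v\in 1+J(R)$, $w\in J(R)$; (4) $s\in J(R)$ and $A$ is similar to $\left[\begin{smallmatrix} v&0\\ 0&w\end{smallmatrix}\right]$ or to $\left[\begin{smallmatrix} w&0\\ 0&v\end{smallmatrix}\right]$ for some $v\in 1+J(R)$, $w\in J(R)$.
   Context: All rings are associative with identity. A ring $R$ is local if $R/J(R)$ is a division ring, where $J(R)$ is the Jacobson radical; $U(R)$ is the group of units. For a ring $R$ and a central element $s\in R$, $M_2(R;s)$ denotes the ring whose elements are the $2\times 2$ arrays $\left[\begin{smallmatrix} a&b\\ c&d\end{smallmatrix}\right]$ with $a,b,c,d\in R$, with componentwise addition and multiplication $\left[\begin{smallmatrix} a&b\\ c&d\end{smallmatrix}\right]\left[\begin{smallmatrix} a'&b'\\ c'&d'\end{smallmatrix}\right]=\left[\begin{smallmatrix} aa'+s^2bc'&ab'+bd'\\ ca'+dc'&s^2cb'+dd'\end{smallmatrix}\right]$, with identity $I_2$. Two elements $A,B\in M_2(R;s)$ are similar if $B=P^{-1}AP$ for some unit $P$ of $M_2(R;s)$. An element $a$ of a ring $T$ is strongly $J$-clean if there is an idempotent $e\in T$ with $ae=ea$ and $a-e\in J(T)$. *)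

theory Defs
  imports "HOL-Algebra.QuotRing"
begin

definition left_ideal :: "'a set \<Rightarrow> ('a, 'b) ring_scheme \<Rightarrow> bool" where
  "left_ideal I R \<longleftrightarrow> additive_subgroup I R \<and>
     (\<forall>r \<in> carrier R. \<forall>x \<in> I. r \<otimes>\<^bsub>R\<^esub> x \<in> I)"

definition maximal_left_ideal :: "'a set \<Rightarrow> ('a, 'b) ring_scheme \<Rightarrow> bool" where
  "maximal_left_ideal I R \<longleftrightarrow> left_ideal I R \<and> I \<noteq> carrier R \<and>
     (\<forall>K. left_ideal K R \<and> I \<subseteq> K \<and> K \<noteq> carrier R \<longrightarrow> K = I)"

definition jacobson :: "('a, 'b) ring_scheme \<Rightarrow> 'a set" where
  "jacobson R = carrier R \<inter> \<Inter> {I. maximal_left_ideal I R}"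

definition division_ring :: "('a, 'b) ring_scheme \<Rightarrow> bool" where
  "division_ring D \<longleftrightarrow> ring D \<and> \<one>\<^bsub>D\<^esub> \<noteq> \<zero>\<^bsub>D\<^esub> \<and>
     carrier D - {\<zero>\<^bsub>D\<^esub>} \<subseteq> Units D"

definition local_ring :: "('a, 'b) ring_scheme \<Rightarrow> bool" where
  "local_ring R \<longleftrightarrow> ring R \<and> division_ring (R Quot jacobson R)"

definition central :: "('a, 'b) ring_scheme \<Rightarrow> 'a \<Rightarrow> bool" where
  "central R s \<longleftrightarrow> s \<in> carrier R \<and> (\<forall>x \<in> carrier R. s \<otimes>\<^bsub>R\<^esub> x = x \<otimes>\<^bsub>R\<^esub> s)"

text \<open>The generalized matrix ring M_2(R;s); an array [[a,b],[c,d]] is the tuple (a,b,c,d).\<close>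
definition M2s :: "('a, 'b) ring_scheme \<Rightarrow> 'a \<Rightarrow> ('a \<times> 'a \<times> 'a \<times> 'a) ring" where
  "M2s R s = \<lparr> carrier = carrier R \<times> carrier R \<times> carrier R \<times> carrier R,
     mult = (\<lambda>(a, b, c, d) (a', b', c', d').
        (a \<otimes>\<^bsub>R\<^esub> a' \<oplus>\<^bsub>R\<^esub> (s \<otimes>\<^bsub>R\<^esub> s) \<otimes>\<^bsub>R\<^esub> b \<otimes>\<^bsub>R\<^esub> c',
         a \<otimes>\<^bsub>R\<^esub> b' \<oplus>\<^bsub>R\<^esub> b \<otimes>\<^bsub>R\<^esub> d',
         c \<otimes>\<^bsub>R\<^esub> a' \<oplus>\<^bsub>R\<^esub> d \<otimes>\<^bsub>R\<^esub> c',
         (s \<otimes>\<^bsub>R\<^esub> s) \<otimes>\<^bsub>R\<^esub> c \<otimes>\<^bsub>R\<^esub> b' \<oplus>\<^bsub>R\<^esub> d \<otimes>\<^bsub>R\<^esub> d')),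
     one = (\<one>\<^bsub>R\<^esub>, \<zero>\<^bsub>R\<^esub>, \<zero>\<^bsub>R\<^esub>, \<one>\<^bsub>R\<^esub>),
     zero = (\<zero>\<^bsub>R\<^esub>, \<zero>\<^bsub>R\<^esub>, \<zero>\<^bsub>R\<^esub>, \<zero>\<^bsub>R\<^esub>),
     add = (\<lambda>(a, b, c, d) (a', b', c', d').
        (a \<oplus>\<^bsub>R\<^esub> a', b \<oplus>\<^bsub>R\<^esub> b', c \<oplus>\<^bsub>R\<^esub> c', d \<oplus>\<^bsub>R\<^esub> d')) \<rparr>"

definition similar :: "('a, 'b) ring_scheme \<Rightarrow> 'a \<Rightarrow> 'a \<Rightarrow> bool" where
  "similar T A B \<longleftrightarrow> (\<exists>P \<in> Units T. B = inv\<^bsub>T\<^esub> P \<otimes>\<^bsub>T\<^esub> A \<otimes>\<^bsub>T\<^esub> P)"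

definition strongly_J_clean :: "('a, 'b) ring_scheme \<Rightarrow> 'a \<Rightarrow> bool" where
  "strongly_J_clean T a \<longleftrightarrow> (\<exists>e \<in> carrier T. e \<otimes>\<^bsub>T\<^esub> e = e \<and>
      a \<otimes>\<^bsub>T\<^esub> e = e \<otimes>\<^bsub>T\<^esub> a \<and> a \<ominus>\<^bsub>T\<^esub> e \<in> jacobson T)"

end

theory Submission
  imports Defs
begin

text \<open>
  Over a local ring every idempotent of \<open>M\<^sub>2(R; s)\<close> is \<open>0\<close>, \<open>1\<close>, or similar to
  \<open>e\<^sub>1\<^sub>1\<close> or \<open>e\<^sub>2\<^sub>2\<close>: for \<open>E = [[a, b], [c, d]]\<close> with \<open>a\<close> a unit the matrix
  \<open>P = [[a, b], [-c, 1 - d]]\<close> satisfies \<open>P E = e\<^sub>1\<^sub>1 P\<close>, and its Schur complement is a unit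
  unless \<open>1 - E\<close> lies in the Jacobson radical; the case \<open>a \<in> J(R)\<close> reduces to this one via
  \<open>1 - E\<close>. Conjugating a strongly J-clean decomposition \<open>A = e + j\<close> so that \<open>e\<close> becomes
  \<open>e\<^sub>1\<^sub>1\<close> (or \<open>e\<^sub>2\<^sub>2\<close>) makes \<open>A\<close> commute with \<open>e\<^sub>1\<^sub>1\<close>, so \<open>A\<close> is diagonal with
  entries in \<open>1 + J(R)\<close> and \<open>J(R)\<close>. Conversely such diagonal matrices are strongly J-clean
  with idempotent \<open>e\<^sub>1\<^sub>1\<close> or \<open>e\<^sub>2\<^sub>2\<close>, and strong J-cleanness is invariant under
  similarity. If \<open>s\<close> is a unit, \<open>[[0, 1], [1, 0]]\<close> is invertible and swaps the two diagonal
  entries, which merges the last two cases.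
\<close>

section \<open>The Jacobson radical\<close>

context ring
begin

lemma additive_subgroup_closedI:
  assumes "H \<subseteq> carrier R" "\<zero> \<in> H"
    and "\<And>x y. x \<in> H \<Longrightarrow> y \<in> H \<Longrightarrow> x \<oplus> y \<in> H" "\<And>x. x \<in> H \<Longrightarrow> \<ominus> x \<in> H"
  shows "additive_subgroup H R"
  using assms by (auto simp: additive_subgroup_def subgroup_def a_inv_def[symmetric])

lemma left_ideal_eq_carrier:
  assumes "left_ideal K R" "\<one> \<in> K"
  shows "K = carrier R"
  using assms additive_subgroup.a_subset unfolding left_ideal_def by (metis r_one subsetI subset_antisym)

lemma maximal_left_idealD:
  assumes "maximal_left_ideal M R"
  shows "left_ideal M R" "\<one> \<notin> M"
    and "\<And>K. left_ideal K R \<Longrightarrow> M \<subseteq> K \<Longrightarrow> \<one> \<notin> K \<Longrightarrow> K = M"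
  using assms left_ideal_eq_carrier unfolding maximal_left_ideal_def by blast+

lemma left_ideal_adjoin:
  assumes M: "left_ideal M R" and x: "x \<in> carrier R"
  shows "left_ideal {m \<oplus> y \<otimes> x | m y. m \<in> M \<and> y \<in> carrier R} R"
    (is "left_ideal ?K R")
proof -
  interpret M: additive_subgroup M R using M by (simp add: left_ideal_def)
  have lM: "r \<otimes> m \<in> M" if "r \<in> carrier R" "m \<in> M" for r m
    using M that by (simp add: left_ideal_def)
  have Mc: "m \<in> carrier R" if "m \<in> M" for m using that M.a_subset by blast
  have "additive_subgroup ?K R"
  proof (rule additive_subgroup_closedI)
    show "?K \<subseteq> carrier R" using x Mc by auto
    show "\<zero> \<in> ?K" using x by (auto intro!: exI[of _ \<zero>])
  next
    fix a b assume "a \<in> ?K" "b \<in> ?K"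
    then obtain m y m' y' where "a = m \<oplus> y \<otimes> x" "b = m' \<oplus> y' \<otimes> x"
      and "m \<in> M" "m' \<in> M" "y \<in> carrier R" "y' \<in> carrier R" by blast
    moreover from this have "a \<oplus> b = (m \<oplus> m') \<oplus> (y \<oplus> y') \<otimes> x"
      using x Mc by (simp add: l_distr a_ac)
    ultimately show "a \<oplus> b \<in> ?K" by blast
  next
    fix a assume "a \<in> ?K"
    then obtain m y where "a = m \<oplus> y \<otimes> x" "m \<in> M" "y \<in> carrier R" by blast
    moreover from this have "\<ominus> a = \<ominus> m \<oplus> (\<ominus> y) \<otimes> x"
      using x Mc by (simp add: l_minus minus_add)
    ultimately show "\<ominus> a \<in> ?K" by blast
  qed
  moreover have "r \<otimes> a \<in> ?K" if r: "r \<in> carrier R" and "a \<in> ?K" for r a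
  proof -
    obtain m y where "a = m \<oplus> y \<otimes> x" "m \<in> M" "y \<in> carrier R" using \<open>a \<in> ?K\<close> by blast
    moreover from this have "r \<otimes> a = r \<otimes> m \<oplus> (r \<otimes> y) \<otimes> x"
      using x r Mc by (simp add: r_distr m_assoc)
    ultimately show ?thesis using lM r by blast
  qed
  ultimately show ?thesis by (simp add: left_ideal_def)
qed

lemma left_ideal_zero: "left_ideal {\<zero>} R"
  by (auto simp: left_ideal_def intro: additive_subgroup_closedI)

lemma exists_maximal_left_ideal:
  assumes "left_ideal I R" "\<one> \<notin> I"
  shows "\<exists>M. maximal_left_ideal M R \<and> I \<subseteq> M"
proof -
  let ?A = "{K. left_ideal K R \<and> I \<subseteq> K \<and> \<one> \<notin> K}"
  have "\<Union>C \<in> ?A" if "C \<noteq> {}" "subset.chain ?A C" for C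
  proof -
    have C: "C \<subseteq> ?A" and lin: "\<And>X Y. X \<in> C \<Longrightarrow> Y \<in> C \<Longrightarrow> X \<subseteq> Y \<or> Y \<subseteq> X"
      using that(2) by (auto simp: subset.chain_def)
    have ag: "additive_subgroup K R" and lK: "\<And>r x. r \<in> carrier R \<Longrightarrow> x \<in> K \<Longrightarrow> r \<otimes> x \<in> K"
      if "K \<in> C" for K
      using C that by (auto simp: left_ideal_def)
    have "additive_subgroup (\<Union>C) R"
    proof (rule additive_subgroup_closedI)
      show "\<Union>C \<subseteq> carrier R" using additive_subgroup.a_subset[OF ag] by blast
      obtain K where "K \<in> C" using \<open>C \<noteq> {}\<close> by blast
      then show "\<zero> \<in> \<Union>C" using additive_subgroup.zero_closed[OF ag] by blast
      show "\<ominus> x \<in> \<Union>C" if "x \<in> \<Union>C" for x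
        using that additive_subgroup.a_inv_closed[OF ag] by blast
      show "x \<oplus> y \<in> \<Union>C" if xy: "x \<in> \<Union>C" "y \<in> \<Union>C" for x y
      proof -
        obtain X Y where XY: "X \<in> C" "Y \<in> C" "x \<in> X" "y \<in> Y" using xy by blast
        then have "x \<oplus> y \<in> Y \<or> x \<oplus> y \<in> X"
          using lin[OF XY(1,2)] additive_subgroup.a_closed[OF ag[OF XY(1)]]
            additive_subgroup.a_closed[OF ag[OF XY(2)]] by blast
        then show ?thesis using XY by blast
      qed
    qed
    moreover have "r \<otimes> x \<in> \<Union>C" if "r \<in> carrier R" "x \<in> \<Union>C" for r x
      using that lK by blast
    moreover have "I \<subseteq> \<Union>C" "\<one> \<notin> \<Union>C" using C \<open>C \<noteq> {}\<close> by blast+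
    ultimately show ?thesis by (simp add: left_ideal_def)
  qed
  then obtain M where M: "M \<in> ?A" and max: "\<forall>K\<in>?A. M \<subseteq> K \<longrightarrow> K = M"
    using subset_Zorn_nonempty[of ?A] assms by blast
  have "K = M" if "left_ideal K R" "M \<subseteq> K" "K \<noteq> carrier R" for K
    using max M that left_ideal_eq_carrier by blast
  then have "maximal_left_ideal M R"
    using M unfolding maximal_left_ideal_def by blast
  then show ?thesis using M by blast
qed

lemma jacobson_subset: "jacobson R \<subseteq> carrier R"
  by (auto simp: jacobson_def)

lemma jacobson_mem_maximal: "x \<in> jacobson R \<Longrightarrow> maximal_left_ideal M R \<Longrightarrow> x \<in> M"
  by (auto simp: jacobson_def)

lemma jacobson_zero_closed: "\<zero> \<in> jacobson R"
  by (auto simp: jacobson_def maximal_left_ideal_def left_ideal_def additive_subgroup.zero_closed)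

lemma jacobson_add_closed: "x \<in> jacobson R \<Longrightarrow> y \<in> jacobson R \<Longrightarrow> x \<oplus> y \<in> jacobson R"
  by (auto simp: jacobson_def maximal_left_ideal_def left_ideal_def additive_subgroup.a_closed)

lemma jacobson_a_inv_closed: "x \<in> jacobson R \<Longrightarrow> \<ominus> x \<in> jacobson R"
  by (auto simp: jacobson_def maximal_left_ideal_def left_ideal_def additive_subgroup.a_inv_closed)

lemma jacobson_minus_closed: "x \<in> jacobson R \<Longrightarrow> y \<in> jacobson R \<Longrightarrow> x \<ominus> y \<in> jacobson R"
  by (simp add: a_minus_def jacobson_add_closed jacobson_a_inv_closed)

lemma jacobson_l_closed: "r \<in> carrier R \<Longrightarrow> x \<in> jacobson R \<Longrightarrow> r \<otimes> x \<in> jacobson R"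
  by (auto simp: jacobson_def maximal_left_ideal_def left_ideal_def)

lemma jacobson_minus_commute:
  "x \<in> carrier R \<Longrightarrow> y \<in> carrier R \<Longrightarrow> x \<ominus> y \<in> jacobson R \<Longrightarrow> y \<ominus> x \<in> jacobson R"
  using jacobson_a_inv_closed[of "x \<ominus> y"] by (simp add: a_minus_def minus_add a_comm)

lemma jacobson_one_minus_left_inv:
  assumes x: "x \<in> jacobson R"
  shows "\<exists>w \<in> carrier R. w \<otimes> (\<one> \<ominus> x) = \<one>"
proof (rule ccontr)
  assume no_inv: "\<not> ?thesis"
  have xc: "x \<in> carrier R" using x jacobson_subset by blast
  let ?L = "{m \<oplus> y \<otimes> (\<one> \<ominus> x) | m y. m \<in> {\<zero>} \<and> y \<in> carrier R}"
  have "\<one> \<notin> ?L" using no_inv xc by auto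
  moreover have "left_ideal ?L R" using left_ideal_adjoin[OF left_ideal_zero, of "\<one> \<ominus> x"] xc by simp
  ultimately obtain M where M: "maximal_left_ideal M R" "?L \<subseteq> M"
    using exists_maximal_left_ideal by blast
  interpret M: additive_subgroup M R using maximal_left_idealD(1)[OF M(1)] by (simp add: left_ideal_def)
  have "\<zero> \<oplus> \<one> \<otimes> (\<one> \<ominus> x) \<in> M" using M(2) by blast
  moreover have "x \<in> M" using x M(1) by (rule jacobson_mem_maximal)
  ultimately have "(\<zero> \<oplus> \<one> \<otimes> (\<one> \<ominus> x)) \<oplus> x \<in> M" by blast
  moreover have "(\<zero> \<oplus> \<one> \<otimes> (\<one> \<ominus> x)) \<oplus> x = \<one>" using xc by (simp add: a_minus_def a_assoc l_neg)
  ultimately show False using maximal_left_idealD(2)[OF M(1)] by simp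
qed

lemma jacobsonI:
  assumes x: "x \<in> carrier R"
    and left_inv: "\<And>y. y \<in> carrier R \<Longrightarrow> \<exists>w \<in> carrier R. w \<otimes> (\<one> \<ominus> y \<otimes> x) = \<one>"
  shows "x \<in> jacobson R"
proof -
  have "x \<in> M" if M: "maximal_left_ideal M R" for M
  proof (rule ccontr)
    assume "x \<notin> M"
    note M' = maximal_left_idealD[OF M]
    have lM: "r \<otimes> m \<in> M" if "r \<in> carrier R" "m \<in> M" for r m
      using M'(1) that by (simp add: left_ideal_def)
    interpret M: additive_subgroup M R using M'(1) by (simp add: left_ideal_def)
    let ?K = "{m \<oplus> y \<otimes> x | m y. m \<in> M \<and> y \<in> carrier R}"
    have "m \<in> ?K" if "m \<in> M" for m
    proof -
      have "m = m \<oplus> \<zero> \<otimes> x" using that x M.a_subset by auto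
      then show ?thesis using that x by blast
    qed
    then have "M \<subseteq> ?K" by blast
    moreover have "x \<in> ?K"
    proof -
      have "x = \<zero> \<oplus> \<one> \<otimes> x" using x by simp
      then show ?thesis using M.zero_closed by blast
    qed
    ultimately have "\<one> \<in> ?K" using M'(3)[OF left_ideal_adjoin[OF M'(1) x]] \<open>x \<notin> M\<close> by blast
    then obtain m y where my: "\<one> = m \<oplus> y \<otimes> x" "m \<in> M" "y \<in> carrier R" by blast
    have mc: "m \<in> carrier R" using my(2) M.a_subset by blast
    have "\<one> \<ominus> y \<otimes> x = (m \<oplus> y \<otimes> x) \<ominus> y \<otimes> x" using my(1) by simp
    also have "\<dots> = m" using mc my(3) x by (simp add: a_minus_def a_assoc r_neg)
    finally obtain w where "w \<in> carrier R" "w \<otimes> m = \<one>" using left_inv[OF my(3)] by auto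
    then show False using lM my(2) M'(2) by metis
  qed
  then show ?thesis using x by (auto simp: jacobson_def)
qed

text \<open>If \<open>w (1 - r a) = 1\<close> then \<open>(1 + a w r)(1 - a r) = 1\<close>, so \<open>jacobsonI\<close> applies to \<open>x r\<close>.\<close>

lemma jacobson_r_closed:
  assumes x: "x \<in> jacobson R" and r: "r \<in> carrier R"
  shows "x \<otimes> r \<in> jacobson R"
proof (rule jacobsonI)
  have xc: "x \<in> carrier R" using x jacobson_subset by blast
  then show "x \<otimes> r \<in> carrier R" using r by simp
  fix y assume y: "y \<in> carrier R"
  define a where "a = y \<otimes> x"
  have ac: "a \<in> carrier R" using y xc by (simp add: a_def)
  obtain w where w: "w \<in> carrier R" "w \<otimes> (\<one> \<ominus> r \<otimes> a) = \<one>"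
    using jacobson_one_minus_left_inv jacobson_l_closed[OF _ x, of "r \<otimes> y"] r y
    by (auto simp: a_def m_assoc xc)
  have "(\<one> \<oplus> a \<otimes> w \<otimes> r) \<otimes> (\<one> \<ominus> a \<otimes> r) = (\<one> \<ominus> a \<otimes> r) \<oplus> a \<otimes> (w \<otimes> (\<one> \<ominus> r \<otimes> a)) \<otimes> r"
    using ac w(1) r by (simp add: ring_simprules)
  also have "\<dots> = \<one>" using ac w r by (simp add: a_minus_def a_assoc l_neg)
  finally have "(\<one> \<oplus> a \<otimes> w \<otimes> r) \<otimes> (\<one> \<ominus> a \<otimes> r) = \<one>" .
  moreover have "y \<otimes> (x \<otimes> r) = a \<otimes> r" using y xc r by (simp add: a_def m_assoc)
  moreover have "\<one> \<oplus> a \<otimes> w \<otimes> r \<in> carrier R" using ac w r by simp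
  ultimately show "\<exists>w\<in>carrier R. w \<otimes> (\<one> \<ominus> y \<otimes> (x \<otimes> r)) = \<one>" by auto
qed

lemma jacobson_ideal: "ideal (jacobson R) R"
proof (intro ideal.intro ideal_axioms.intro)
  show "additive_subgroup (jacobson R) R"
    by (rule additive_subgroup_closedI)
      (simp_all add: jacobson_subset jacobson_zero_closed jacobson_add_closed jacobson_a_inv_closed)
qed (simp_all add: ring_axioms jacobson_l_closed jacobson_r_closed)

lemma jacobson_one_minus_Units:
  assumes x: "x \<in> jacobson R"
  shows "\<one> \<ominus> x \<in> Units R"
proof -
  have xc: "x \<in> carrier R" using x jacobson_subset by blast
  obtain w where w: "w \<in> carrier R" "w \<otimes> (\<one> \<ominus> x) = \<one>"
    using jacobson_one_minus_left_inv x by blast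
  have "w = w \<otimes> ((\<one> \<ominus> x) \<oplus> x)" using xc w(1) by (simp add: a_minus_def a_assoc l_neg)
  also have "\<dots> = \<one> \<oplus> w \<otimes> x" using xc w by (simp add: r_distr)
  finally have "w = \<one> \<ominus> \<ominus> (w \<otimes> x)" using xc w(1) by (simp add: a_minus_def)
  moreover have "\<ominus> (w \<otimes> x) \<in> jacobson R" using jacobson_a_inv_closed jacobson_l_closed w x by blast
  ultimately obtain w' where w': "w' \<in> carrier R" "w' \<otimes> w = \<one>"
    using jacobson_one_minus_left_inv by metis
  have "w' = \<one> \<ominus> x" using inv_unique[OF w'(2) w(2)] w w' xc by simp
  then have "(\<one> \<ominus> x) \<otimes> w = \<one>" using w'(2) by simp
  then show ?thesis using w xc unfolding Units_def by auto
qed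

lemma jacobson_idem_eq_zero:
  assumes e: "e \<in> jacobson R" and idem: "e \<otimes> e = e"
  shows "e = \<zero>"
proof -
  have ec: "e \<in> carrier R" using e jacobson_subset by blast
  obtain w where w: "w \<in> carrier R" "w \<otimes> (\<one> \<ominus> e) = \<one>"
    using jacobson_one_minus_left_inv e by blast
  have "e = (w \<otimes> (\<one> \<ominus> e)) \<otimes> e" using w ec by simp
  also have "\<dots> = w \<otimes> (e \<ominus> e \<otimes> e)" using w(1) ec by (simp add: m_assoc a_minus_def l_distr l_minus)
  also have "\<dots> = \<zero>" using idem w ec by (simp add: a_minus_def r_neg)
  finally show ?thesis .
qed

end

section \<open>Local rings\<close>

context monoid
begin

lemma Units_inv_cancel_left:
  "P \<in> Units G \<Longrightarrow> x \<in> carrier G \<Longrightarrow> inv P \<otimes> (P \<otimes> x) = x"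
  by (simp add: Units_closed m_assoc[symmetric])

lemma Units_cancel_inv_left:
  "P \<in> Units G \<Longrightarrow> x \<in> carrier G \<Longrightarrow> P \<otimes> (inv P \<otimes> x) = x"
  by (simp add: Units_closed m_assoc[symmetric])

lemma Units_if_mult_Units:
  assumes x: "x \<in> carrier G" and y: "y \<in> carrier G"
    and xy: "x \<otimes> y \<in> Units G" and yx: "y \<otimes> x \<in> Units G"
  shows "x \<in> Units G"
proof -
  define l where "l = inv (y \<otimes> x) \<otimes> y"
  define r where "r = y \<otimes> inv (x \<otimes> y)"
  have lc: "l \<in> carrier G" and rc: "r \<in> carrier G" using x y xy yx by (simp_all add: l_def r_def)
  have lx: "l \<otimes> x = \<one>" using x y yx by (simp add: l_def m_assoc)
  have xr: "x \<otimes> r = \<one>" using x y xy by (simp add: r_def m_assoc[symmetric])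
  have "l = r" using inv_unique[OF lx xr x lc rc] .
  then show ?thesis using x lc lx xr unfolding Units_def by auto
qed

end

locale ring_local = ring +
  assumes local: "local_ring R"
begin

interpretation J: ideal "jacobson R" R
  by (rule jacobson_ideal)

lemma division_ring_quot: "division_ring (R Quot jacobson R)"
  using local by (simp add: local_ring_def)

lemma one_notin_jacobson: "\<one> \<notin> jacobson R"
proof
  assume "\<one> \<in> jacobson R"
  then have "jacobson R +> \<one> = jacobson R" by (rule J.a_rcos_const)
  then show False using division_ring_quot by (simp add: division_ring_def FactRing_def)
qed

lemma one_not_zero: "\<one> \<noteq> \<zero>"
  using one_notin_jacobson jacobson_zero_closed by auto

lemma jacobson_not_Units: "x \<in> jacobson R \<Longrightarrow> x \<notin> Units R"
  using jacobson_l_closed[of "inv x" x] one_notin_jacobson by auto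

lemma rcos_eq_one_Units:
  assumes a: "a \<in> carrier R" and eq: "jacobson R +> a = jacobson R +> \<one>"
  shows "a \<in> Units R"
proof -
  have "a \<ominus> \<one> \<in> jacobson R"
    using J.a_rcos_module_minus[OF ring_axioms one_closed a] J.a_repr_independenceD[OF a eq[symmetric]] by simp
  then have "\<one> \<ominus> \<ominus> (a \<ominus> \<one>) \<in> Units R"
    by (intro jacobson_one_minus_Units jacobson_a_inv_closed)
  moreover have "\<one> \<ominus> \<ominus> (a \<ominus> \<one>) = a" using a by (simp add: a_minus_def a_lcomm[of \<one> a] r_neg)
  ultimately show ?thesis by simp
qed

text \<open>The residue class of \<open>x \<notin> J(R)\<close> is invertible in \<open>R/J(R)\<close>; lifting a two-sided inverse
  gives \<open>y\<close> with \<open>x y\<close> and \<open>y x\<close> in \<open>1 + J(R)\<close>.\<close>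

lemma notin_jacobson_Units:
  assumes x: "x \<in> carrier R" and nx: "x \<notin> jacobson R"
  shows "x \<in> Units R"
proof -
  have "jacobson R +> x \<noteq> jacobson R"
    using J.a_rcos_self[OF x] nx by auto
  moreover have "jacobson R +> x \<in> carrier (R Quot jacobson R)"
    using x by (auto simp: FactRing_def A_RCOSETS_def')
  ultimately have "jacobson R +> x \<in> Units (R Quot jacobson R)"
    using division_ring_quot unfolding division_ring_def by (auto simp: FactRing_def)
  then obtain Y where Y: "Y \<in> carrier (R Quot jacobson R)"
      "Y \<otimes>\<^bsub>R Quot jacobson R\<^esub> (jacobson R +> x) = \<one>\<^bsub>R Quot jacobson R\<^esub>"
      "(jacobson R +> x) \<otimes>\<^bsub>R Quot jacobson R\<^esub> Y = \<one>\<^bsub>R Quot jacobson R\<^esub>"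
    unfolding Units_def by blast
  obtain y where y: "y \<in> carrier R" "Y = jacobson R +> y"
    using Y(1) by (auto simp: FactRing_def A_RCOSETS_def')
  have "jacobson R +> (y \<otimes> x) = jacobson R +> \<one>" "jacobson R +> (x \<otimes> y) = jacobson R +> \<one>"
    using Y(2,3) x y by (simp_all add: FactRing_def J.rcoset_mult_add)
  then show ?thesis
    using Units_if_mult_Units[OF x y(1)] rcos_eq_one_Units x y(1) by simp
qed

lemma Units_add_jacobson:
  assumes u: "u \<in> Units R" and j: "j \<in> jacobson R"
  shows "u \<oplus> j \<in> Units R"
proof (rule ccontr)
  have uc: "u \<in> carrier R" and jc: "j \<in> carrier R" using u j jacobson_subset by auto
  assume "u \<oplus> j \<notin> Units R"
  then have "(u \<oplus> j) \<ominus> j \<in> jacobson R"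
    using notin_jacobson_Units jacobson_minus_closed j uc jc by blast
  moreover have "(u \<oplus> j) \<ominus> j = u" using uc jc by (simp add: a_minus_def a_assoc r_neg)
  ultimately show False using jacobson_not_Units u by simp
qed

lemma Units_of_mult_Units_left:
  "x \<in> carrier R \<Longrightarrow> y \<in> carrier R \<Longrightarrow> x \<otimes> y \<in> Units R \<Longrightarrow> x \<in> Units R"
  using notin_jacobson_Units jacobson_r_closed jacobson_not_Units by blast

end

section \<open>Similarity and strong J-cleanness\<close>

context ring
begin

lemma add_eq_imp_eq_minus:
  "x \<in> carrier R \<Longrightarrow> y \<in> carrier R \<Longrightarrow> x \<oplus> y = z \<Longrightarrow> y = z \<ominus> x"
  by (auto simp: a_minus_def a_comm[of x y] a_assoc r_neg)

lemma one_minus_one_minus: "x \<in> carrier R \<Longrightarrow> \<one> \<ominus> (\<one> \<ominus> x) = x"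
  by (simp add: a_minus_def minus_add a_assoc[symmetric] r_neg)

lemma one_minus_idem:
  assumes e: "e \<in> carrier R" and idem: "e \<otimes> e = e"
  shows "(\<one> \<ominus> e) \<otimes> (\<one> \<ominus> e) = \<one> \<ominus> e"
proof -
  have "(\<one> \<ominus> e) \<otimes> (\<one> \<ominus> e) = \<one> \<ominus> e \<ominus> e \<oplus> e \<otimes> e"
    using e by (simp add: a_minus_def l_distr r_distr l_minus r_minus a_assoc minus_add minus_minus)
  also have "\<dots> = \<one> \<ominus> e" using idem e by (simp add: a_minus_def a_assoc l_neg)
  finally show ?thesis .
qed

lemma conj_mult:
  assumes "P \<in> Units R" "x \<in> carrier R" "y \<in> carrier R"
  shows "(inv P \<otimes> x \<otimes> P) \<otimes> (inv P \<otimes> y \<otimes> P) = inv P \<otimes> (x \<otimes> y) \<otimes> P"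
  using assms by (simp add: Units_closed m_assoc Units_cancel_inv_left)

lemma conj_minus:
  assumes "P \<in> Units R" "x \<in> carrier R" "y \<in> carrier R"
  shows "inv P \<otimes> x \<otimes> P \<ominus> inv P \<otimes> y \<otimes> P = inv P \<otimes> (x \<ominus> y) \<otimes> P"
  using assms by (simp add: Units_closed a_minus_def r_distr l_distr r_minus l_minus)

lemma jacobson_conj: "P \<in> Units R \<Longrightarrow> x \<in> jacobson R \<Longrightarrow> inv P \<otimes> x \<otimes> P \<in> jacobson R"
  by (simp add: Units_closed jacobson_l_closed jacobson_r_closed)

lemma similarI:
  assumes P: "P \<in> Units R" and f: "f \<in> carrier R" and PE: "P \<otimes> E = f \<otimes> P"
  shows "similar R E f"
proof -
  have "inv (inv P) \<otimes> E \<otimes> inv P = f \<otimes> P \<otimes> inv P" using P PE by simp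
  also have "\<dots> = f" using P f by (simp add: Units_closed m_assoc)
  finally have "f = inv (inv P) \<otimes> E \<otimes> inv P" ..
  then show ?thesis using P unfolding similar_def by blast
qed

lemma similar_sym:
  assumes A: "A \<in> carrier R" and "similar R A B"
  shows "similar R B A"
proof -
  obtain P where P: "P \<in> Units R" "B = inv P \<otimes> A \<otimes> P" using assms(2) unfolding similar_def by blast
  have "A = inv (inv P) \<otimes> B \<otimes> inv P"
    using P A by (simp add: Units_closed m_assoc Units_cancel_inv_left)
  then show ?thesis using P(1) unfolding similar_def by blast
qed

lemma similar_trans:
  assumes A: "A \<in> carrier R" and "similar R A B" "similar R B C"
  shows "similar R A C"
proof -
  obtain P Q where P: "P \<in> Units R" "B = inv P \<otimes> A \<otimes> P" and Q: "Q \<in> Units R" "C = inv Q \<otimes> B \<otimes> Q"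
    using assms(2,3) unfolding similar_def by blast
  have c: "P \<in> carrier R" "Q \<in> carrier R" "inv P \<in> carrier R" "inv Q \<in> carrier R"
    using P(1) Q(1) by auto
  have "(P \<otimes> Q) \<otimes> (inv Q \<otimes> inv P) = P \<otimes> (Q \<otimes> inv Q) \<otimes> inv P"
    "(inv Q \<otimes> inv P) \<otimes> (P \<otimes> Q) = inv Q \<otimes> (inv P \<otimes> P) \<otimes> Q"
    using c by (simp_all add: m_assoc)
  then have "inv Q \<otimes> inv P = inv (P \<otimes> Q)"
    using inv_unique'[of "P \<otimes> Q" "inv Q \<otimes> inv P"] P(1) Q(1) c by simp
  then have "C = inv (P \<otimes> Q) \<otimes> A \<otimes> (P \<otimes> Q)" using P Q A c by (simp add: m_assoc[symmetric])
  then show ?thesis using P(1) Q(1) unfolding similar_def by blast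
qed

lemma similar_one_minus:
  assumes x: "x \<in> carrier R" and "similar R x y"
  shows "similar R (\<one> \<ominus> x) (\<one> \<ominus> y)"
proof -
  obtain P where P: "P \<in> Units R" "y = inv P \<otimes> x \<otimes> P" using assms(2) unfolding similar_def by blast
  have "inv P \<otimes> \<one> \<otimes> P = \<one>" using P(1) by (simp add: Units_closed)
  then have "\<one> \<ominus> y = inv P \<otimes> (\<one> \<ominus> x) \<otimes> P" using conj_minus[OF P(1) one_closed x] P(2) by simp
  then show ?thesis using P(1) unfolding similar_def by blast
qed

lemma strongly_J_clean_if_jacobson: "A \<in> jacobson R \<Longrightarrow> strongly_J_clean R A"
  using jacobson_subset unfolding strongly_J_clean_def
  by (intro bexI[of _ \<zero>]) (auto simp: a_minus_def)

lemma strongly_J_clean_if_one_minus_jacobson: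
  "A \<in> carrier R \<Longrightarrow> \<one> \<ominus> A \<in> jacobson R \<Longrightarrow> strongly_J_clean R A"
  unfolding strongly_J_clean_def by (intro bexI[of _ \<one>]) (auto intro: jacobson_minus_commute)

lemma conj_strongly_J_clean_witness:
  assumes P: "P \<in> Units R" and A: "A \<in> carrier R" and e: "e \<in> carrier R"
    and comm: "A \<otimes> e = e \<otimes> A" and AJ: "A \<ominus> e \<in> jacobson R"
  shows "(inv P \<otimes> A \<otimes> P) \<otimes> (inv P \<otimes> e \<otimes> P) = (inv P \<otimes> e \<otimes> P) \<otimes> (inv P \<otimes> A \<otimes> P)"
    and "inv P \<otimes> A \<otimes> P \<ominus> inv P \<otimes> e \<otimes> P \<in> jacobson R"
  using assms by (simp_all add: conj_mult conj_minus jacobson_conj)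

lemma strongly_J_clean_conj:
  assumes P: "P \<in> Units R" and A: "A \<in> carrier R" and clean: "strongly_J_clean R A"
  shows "strongly_J_clean R (inv P \<otimes> A \<otimes> P)"
proof -
  obtain e where e: "e \<in> carrier R" "e \<otimes> e = e" "A \<otimes> e = e \<otimes> A" "A \<ominus> e \<in> jacobson R"
    using clean unfolding strongly_J_clean_def by blast
  have "(inv P \<otimes> e \<otimes> P) \<otimes> (inv P \<otimes> e \<otimes> P) = inv P \<otimes> e \<otimes> P"
    using conj_mult[OF P e(1) e(1)] e(2) by simp
  moreover have "inv P \<otimes> e \<otimes> P \<in> carrier R" using P e by (simp add: Units_closed)
  ultimately show ?thesis
    using conj_strongly_J_clean_witness[OF P A e(1,3,4)] unfolding strongly_J_clean_def by blast
qed

lemma strongly_J_clean_similar: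
  assumes A: "A \<in> carrier R" and AB: "similar R A B"
  shows "strongly_J_clean R A \<longleftrightarrow> strongly_J_clean R B"
proof -
  obtain P where P: "P \<in> Units R" "B = inv P \<otimes> A \<otimes> P" using AB unfolding similar_def by blast
  then have B: "B \<in> carrier R" using A by (simp add: Units_closed)
  obtain Q where Q: "Q \<in> Units R" "A = inv Q \<otimes> B \<otimes> Q"
    using similar_sym[OF A AB] unfolding similar_def by blast
  show ?thesis
  proof
    show "strongly_J_clean R B" if "strongly_J_clean R A"
      using strongly_J_clean_conj[OF P(1) A that] P(2) by simp
    show "strongly_J_clean R A" if "strongly_J_clean R B"
      using strongly_J_clean_conj[OF Q(1) B that] Q(2) by simp
  qed
qed

lemma strongly_J_clean_idem_similar:
  assumes A: "A \<in> carrier R" and e: "e \<in> carrier R"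
    and comm: "A \<otimes> e = e \<otimes> A" and AJ: "A \<ominus> e \<in> jacobson R" and ef: "similar R e f"
  shows "\<exists>B \<in> carrier R. similar R A B \<and> B \<otimes> f = f \<otimes> B \<and> B \<ominus> f \<in> jacobson R"
proof -
  obtain P where P: "P \<in> Units R" "f = inv P \<otimes> e \<otimes> P" using ef unfolding similar_def by blast
  have "similar R A (inv P \<otimes> A \<otimes> P)" using P(1) unfolding similar_def by blast
  moreover have "inv P \<otimes> A \<otimes> P \<in> carrier R" using P A by (simp add: Units_closed)
  ultimately show ?thesis using conj_strongly_J_clean_witness[OF P(1) A e comm AJ] P(2) by blast
qed

end

section \<open>The ring \<open>M\<^sub>2(R; s)\<close>\<close>

locale M2s_ring = ring +
  fixes s
  assumes central: "central R s"
begin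

abbreviation T where "T \<equiv> M2s R s"

definition t where "t = s \<otimes> s"

lemma s_closed: "s \<in> carrier R"
  using central by (simp add: central_def)

lemma t_closed [simp]: "t \<in> carrier R"
  by (simp add: t_def s_closed)

lemma t_comm: "x \<in> carrier R \<Longrightarrow> x \<otimes> t = t \<otimes> x"
  using central s_closed unfolding central_def t_def by (metis m_assoc)

lemma t_lcomm: "x \<in> carrier R \<Longrightarrow> y \<in> carrier R \<Longrightarrow> x \<otimes> (t \<otimes> y) = t \<otimes> (x \<otimes> y)"
  by (simp add: m_assoc[symmetric] t_comm)

lemma M2s_carrier: "carrier T = carrier R \<times> carrier R \<times> carrier R \<times> carrier R"
  by (simp add: M2s_def)

lemma M2s_mult:
  assumes "a \<in> carrier R" "b \<in> carrier R" "c \<in> carrier R" "d \<in> carrier R"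
    "a' \<in> carrier R" "b' \<in> carrier R" "c' \<in> carrier R" "d' \<in> carrier R"
  shows "(a, b, c, d) \<otimes>\<^bsub>T\<^esub> (a', b', c', d') =
    (a \<otimes> a' \<oplus> t \<otimes> (b \<otimes> c'), a \<otimes> b' \<oplus> b \<otimes> d', c \<otimes> a' \<oplus> d \<otimes> c', t \<otimes> (c \<otimes> b') \<oplus> d \<otimes> d')"
  using assms by (simp add: M2s_def t_def m_assoc s_closed)

lemma M2s_one: "\<one>\<^bsub>T\<^esub> = (\<one>, \<zero>, \<zero>, \<one>)"
  by (simp add: M2s_def)

lemma M2s_zero: "\<zero>\<^bsub>T\<^esub> = (\<zero>, \<zero>, \<zero>, \<zero>)"
  by (simp add: M2s_def)

lemma M2s_add: "(a, b, c, d) \<oplus>\<^bsub>T\<^esub> (a', b', c', d') = (a \<oplus> a', b \<oplus> b', c \<oplus> c', d \<oplus> d')"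
  by (simp add: M2s_def)

lemma M2s_cases [elim]:
  assumes "x \<in> carrier T"
  obtains a b c d where "x = (a, b, c, d)"
    "a \<in> carrier R" "b \<in> carrier R" "c \<in> carrier R" "d \<in> carrier R"
  using assms by (cases x) (auto simp: M2s_carrier)

text \<open>Associativity of the multiplication is where centrality of \<open>s\<close> is needed.\<close>

lemma ring_M2s: "ring T"
proof (rule ringI)
  show "abelian_group T"
  proof (rule abelian_groupI)
    fix x assume "x \<in> carrier T"
    then obtain a b c d where x: "x = (a, b, c, d)"
      and c: "a \<in> carrier R" "b \<in> carrier R" "c \<in> carrier R" "d \<in> carrier R" by blast
    show "\<exists>y\<in>carrier T. y \<oplus>\<^bsub>T\<^esub> x = \<zero>\<^bsub>T\<^esub>"
      using c by (intro bexI[of _ "(\<ominus> a, \<ominus> b, \<ominus> c, \<ominus> d)"]) (simp_all add: x M2s_carrier M2s_add M2s_zero l_neg)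
  qed (auto simp: M2s_carrier M2s_add M2s_zero a_ac)
next
  show "monoid T"
    by (rule monoidI)
      (auto simp: M2s_carrier M2s_mult M2s_one l_distr r_distr m_assoc t_lcomm a_ac)
qed (auto simp: M2s_carrier M2s_mult M2s_add l_distr r_distr a_ac)

sublocale T: ring T by (rule ring_M2s)

lemma M2s_a_inv:
  assumes "a \<in> carrier R" "b \<in> carrier R" "c \<in> carrier R" "d \<in> carrier R"
  shows "\<ominus>\<^bsub>T\<^esub> (a, b, c, d) = (\<ominus> a, \<ominus> b, \<ominus> c, \<ominus> d)"
  using assms
  by (intro T.minus_equality)
    (simp_all add: M2s_carrier M2s_add M2s_zero l_neg)

lemma M2s_minus:
  assumes "a \<in> carrier R" "b \<in> carrier R" "c \<in> carrier R" "d \<in> carrier R"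
    "a' \<in> carrier R" "b' \<in> carrier R" "c' \<in> carrier R" "d' \<in> carrier R"
  shows "(a, b, c, d) \<ominus>\<^bsub>T\<^esub> (a', b', c', d') = (a \<ominus> a', b \<ominus> b', c \<ominus> c', d \<ominus> d')"
  using assms by (simp add: a_minus_def M2s_a_inv M2s_add)

end

locale M2s_local = M2s_ring + ring_local
begin

lemma M2s_UnitsI:
  "X \<in> carrier T \<Longrightarrow> Y \<in> carrier T \<Longrightarrow> X \<otimes>\<^bsub>T\<^esub> Y = \<one>\<^bsub>T\<^esub> \<Longrightarrow> Y \<otimes>\<^bsub>T\<^esub> X = \<one>\<^bsub>T\<^esub>
    \<Longrightarrow> X \<in> Units T"
  unfolding Units_def by blast

lemma M2s_Units_lower: "x \<in> carrier R \<Longrightarrow> (\<one>, \<zero>, x, \<one>) \<in> Units T"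
  by (rule M2s_UnitsI[of _ "(\<one>, \<zero>, \<ominus> x, \<one>)"]) (simp_all add: M2s_carrier M2s_mult M2s_one r_neg l_neg)

lemma M2s_Units_upper: "x \<in> carrier R \<Longrightarrow> (\<one>, x, \<zero>, \<one>) \<in> Units T"
  by (rule M2s_UnitsI[of _ "(\<one>, \<ominus> x, \<zero>, \<one>)"]) (simp_all add: M2s_carrier M2s_mult M2s_one r_neg l_neg)

lemma M2s_Units_diag: "x \<in> Units R \<Longrightarrow> y \<in> Units R \<Longrightarrow> (x, \<zero>, \<zero>, y) \<in> Units T"
  by (rule M2s_UnitsI[of _ "(inv x, \<zero>, \<zero>, inv y)"]) (simp_all add: M2s_carrier M2s_mult M2s_one Units_closed)

text \<open>Block \<open>LDU\<close> factorization with the Schur complement \<open>\<delta> - s\<^sup>2 \<gamma> \<alpha>\<inverse> \<beta>\<close> on the diagonal.\<close>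

lemma M2s_Units_Schur:
  assumes \<alpha>: "\<alpha> \<in> Units R" and c: "\<beta> \<in> carrier R" "\<gamma> \<in> carrier R" "\<delta> \<in> carrier R"
    and schur: "\<delta> \<ominus> t \<otimes> (\<gamma> \<otimes> (inv \<alpha> \<otimes> \<beta>)) \<in> Units R"
  shows "(\<alpha>, \<beta>, \<gamma>, \<delta>) \<in> Units T"
proof -
  define S where "S = \<delta> \<ominus> t \<otimes> (\<gamma> \<otimes> (inv \<alpha> \<otimes> \<beta>))"
  have ac: "\<alpha> \<in> carrier R" "inv \<alpha> \<in> carrier R" using \<alpha> by auto
  have Sc: "S \<in> carrier R" using ac c by (simp add: S_def)
  have L: "(\<one>, \<zero>, \<gamma> \<otimes> inv \<alpha>, \<one>) \<in> Units T" using ac c by (simp add: M2s_Units_lower)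
  have "S \<in> Units R" using schur by (simp add: S_def)
  then have D: "(\<alpha>, \<zero>, \<zero>, S) \<in> Units T" using \<alpha> by (rule M2s_Units_diag[rotated])
  have U: "(\<one>, inv \<alpha> \<otimes> \<beta>, \<zero>, \<one>) \<in> Units T" using ac c by (simp add: M2s_Units_upper)
  have "(\<one>, \<zero>, \<gamma> \<otimes> inv \<alpha>, \<one>) \<otimes>\<^bsub>T\<^esub> (\<alpha>, \<zero>, \<zero>, S) \<otimes>\<^bsub>T\<^esub> (\<one>, inv \<alpha> \<otimes> \<beta>, \<zero>, \<one>)
      = (\<alpha>, \<beta>, \<gamma>, t \<otimes> (\<gamma> \<otimes> (inv \<alpha> \<otimes> \<beta>)) \<oplus> S)"
    using \<alpha> ac c Sc by (simp add: M2s_mult m_assoc Units_cancel_inv_left Units_inv_cancel_left)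
  also have "\<dots> = (\<alpha>, \<beta>, \<gamma>, \<delta>)"
    using ac c by (simp add: S_def a_minus_def a_lcomm[of "t \<otimes> (\<gamma> \<otimes> (inv \<alpha> \<otimes> \<beta>))" \<delta>] r_neg)
  finally have "(\<one>, \<zero>, \<gamma> \<otimes> inv \<alpha>, \<one>) \<otimes>\<^bsub>T\<^esub> (\<alpha>, \<zero>, \<zero>, S) \<otimes>\<^bsub>T\<^esub> (\<one>, inv \<alpha> \<otimes> \<beta>, \<zero>, \<one>)
      = (\<alpha>, \<beta>, \<gamma>, \<delta>)" .
  moreover have "(\<one>, \<zero>, \<gamma> \<otimes> inv \<alpha>, \<one>) \<otimes>\<^bsub>T\<^esub> (\<alpha>, \<zero>, \<zero>, S) \<otimes>\<^bsub>T\<^esub> (\<one>, inv \<alpha> \<otimes> \<beta>, \<zero>, \<one>) \<in> Units T"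
    using L D U by (intro T.Units_m_closed)
  ultimately show ?thesis by simp
qed

lemma M2s_Units_diag_Units:
  assumes "\<alpha> \<in> Units R" "\<delta> \<in> Units R" "\<beta> \<in> jacobson R" "\<gamma> \<in> jacobson R"
  shows "(\<alpha>, \<beta>, \<gamma>, \<delta>) \<in> Units T"
proof (rule M2s_Units_Schur)
  have c: "\<beta> \<in> carrier R" "\<gamma> \<in> carrier R" "inv \<alpha> \<in> carrier R"
    using assms jacobson_subset by auto
  then show "\<beta> \<in> carrier R" "\<gamma> \<in> carrier R" "\<delta> \<in> carrier R" using assms by auto
  have "t \<otimes> (\<gamma> \<otimes> (inv \<alpha> \<otimes> \<beta>)) \<in> jacobson R"
    using assms c by (simp add: jacobson_l_closed jacobson_r_closed)
  then show "\<delta> \<ominus> t \<otimes> (\<gamma> \<otimes> (inv \<alpha> \<otimes> \<beta>)) \<in> Units R"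
    unfolding a_minus_def using assms by (simp add: Units_add_jacobson jacobson_a_inv_closed)
qed (rule assms)

lemma jacobson_M2sI:
  assumes J: "a \<in> jacobson R" "b \<in> jacobson R" "c \<in> jacobson R" "d \<in> jacobson R"
  shows "(a, b, c, d) \<in> jacobson T"
proof (rule T.jacobsonI)
  have c: "a \<in> carrier R" "b \<in> carrier R" "c \<in> carrier R" "d \<in> carrier R"
    using J jacobson_subset by auto
  then show "(a, b, c, d) \<in> carrier T" by (simp add: M2s_carrier)
  fix Y assume "Y \<in> carrier T"
  then obtain p q r u where Y: "Y = (p, q, r, u)"
    and pqru: "p \<in> carrier R" "q \<in> carrier R" "r \<in> carrier R" "u \<in> carrier R" by blast
  define j1 where "j1 = p \<otimes> a \<oplus> t \<otimes> (q \<otimes> c)"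
  define j2 where "j2 = p \<otimes> b \<oplus> q \<otimes> d"
  define j3 where "j3 = r \<otimes> a \<oplus> u \<otimes> c"
  define j4 where "j4 = t \<otimes> (r \<otimes> b) \<oplus> u \<otimes> d"
  have jJ: "j1 \<in> jacobson R" "j2 \<in> jacobson R" "j3 \<in> jacobson R" "j4 \<in> jacobson R"
    unfolding j1_def j2_def j3_def j4_def using J pqru c
    by (simp_all add: jacobson_add_closed jacobson_l_closed)
  then have "j1 \<in> carrier R" "j2 \<in> carrier R" "j3 \<in> carrier R" "j4 \<in> carrier R"
    using jacobson_subset by auto
  moreover have "Y \<otimes>\<^bsub>T\<^esub> (a, b, c, d) = (j1, j2, j3, j4)"
    using c pqru by (simp add: Y M2s_mult j1_def j2_def j3_def j4_def)
  ultimately have "\<one>\<^bsub>T\<^esub> \<ominus>\<^bsub>T\<^esub> Y \<otimes>\<^bsub>T\<^esub> (a, b, c, d) = (\<one> \<ominus> j1, \<zero> \<ominus> j2, \<zero> \<ominus> j3, \<one> \<ominus> j4)"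
    by (simp add: M2s_one M2s_minus)
  moreover have "(\<one> \<ominus> j1, \<zero> \<ominus> j2, \<zero> \<ominus> j3, \<one> \<ominus> j4) \<in> Units T"
    using jJ by (simp add: M2s_Units_diag_Units jacobson_one_minus_Units jacobson_minus_closed jacobson_zero_closed)
  ultimately show "\<exists>W\<in>carrier T. W \<otimes>\<^bsub>T\<^esub> (\<one>\<^bsub>T\<^esub> \<ominus>\<^bsub>T\<^esub> Y \<otimes>\<^bsub>T\<^esub> (a, b, c, d)) = \<one>\<^bsub>T\<^esub>"
    using T.Units_l_inv_ex by metis
qed

lemma e11_notin_jacobson: "(\<one>, \<zero>, \<zero>, \<zero>) \<notin> jacobson T"
proof
  assume "(\<one>, \<zero>, \<zero>, \<zero>) \<in> jacobson T"
  moreover have "(\<one>, \<zero>, \<zero>, \<zero>) \<otimes>\<^bsub>T\<^esub> (\<one>, \<zero>, \<zero>, \<zero>) = (\<one>, \<zero>, \<zero>, \<zero>)"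
    by (simp add: M2s_mult)
  ultimately have "(\<one>, \<zero>, \<zero>, \<zero>) = \<zero>\<^bsub>T\<^esub>" by (rule T.jacobson_idem_eq_zero)
  then show False using one_not_zero by (simp add: M2s_zero)
qed

lemma e22_notin_jacobson: "(\<zero>, \<zero>, \<zero>, \<one>) \<notin> jacobson T"
proof
  assume "(\<zero>, \<zero>, \<zero>, \<one>) \<in> jacobson T"
  moreover have "(\<zero>, \<zero>, \<zero>, \<one>) \<otimes>\<^bsub>T\<^esub> (\<zero>, \<zero>, \<zero>, \<one>) = (\<zero>, \<zero>, \<zero>, \<one>)"
    by (simp add: M2s_mult)
  ultimately have "(\<zero>, \<zero>, \<zero>, \<one>) = \<zero>\<^bsub>T\<^esub>" by (rule T.jacobson_idem_eq_zero)
  then show False using one_not_zero by (simp add: M2s_zero)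
qed

text \<open>Cutting a unit diagonal entry out of a matrix in \<open>J(T)\<close> would put a matrix unit in \<open>J(T)\<close>.\<close>

lemma jacobson_M2sD:
  assumes X: "(a, b, c, d) \<in> jacobson T"
  shows "a \<in> jacobson R" "d \<in> jacobson R"
proof -
  have c: "a \<in> carrier R" "b \<in> carrier R" "c \<in> carrier R" "d \<in> carrier R"
    using T.jacobson_subset X by (auto simp: M2s_carrier)
  show "a \<in> jacobson R"
  proof (rule ccontr)
    assume "a \<notin> jacobson R"
    then have a: "a \<in> Units R" using notin_jacobson_Units c by simp
    have "(inv a, \<zero>, \<zero>, \<zero>) \<otimes>\<^bsub>T\<^esub> (a, b, c, d) \<otimes>\<^bsub>T\<^esub> (\<one>, \<zero>, \<zero>, \<zero>) \<in> jacobson T"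
      using a by (intro T.jacobson_r_closed[OF T.jacobson_l_closed[OF _ X]]) (simp_all add: M2s_carrier)
    moreover have "(inv a, \<zero>, \<zero>, \<zero>) \<otimes>\<^bsub>T\<^esub> (a, b, c, d) \<otimes>\<^bsub>T\<^esub> (\<one>, \<zero>, \<zero>, \<zero>) = (\<one>, \<zero>, \<zero>, \<zero>)"
      using a c by (simp add: M2s_mult)
    ultimately show False using e11_notin_jacobson by simp
  qed
  show "d \<in> jacobson R"
  proof (rule ccontr)
    assume "d \<notin> jacobson R"
    then have d: "d \<in> Units R" using notin_jacobson_Units c by simp
    have "(\<zero>, \<zero>, \<zero>, inv d) \<otimes>\<^bsub>T\<^esub> (a, b, c, d) \<otimes>\<^bsub>T\<^esub> (\<zero>, \<zero>, \<zero>, \<one>) \<in> jacobson T"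
      using d by (intro T.jacobson_r_closed[OF T.jacobson_l_closed[OF _ X]]) (simp_all add: M2s_carrier)
    moreover have "(\<zero>, \<zero>, \<zero>, inv d) \<otimes>\<^bsub>T\<^esub> (a, b, c, d) \<otimes>\<^bsub>T\<^esub> (\<zero>, \<zero>, \<zero>, \<one>) = (\<zero>, \<zero>, \<zero>, \<one>)"
      using d c by (simp add: M2s_mult)
    ultimately show False using e22_notin_jacobson by simp
  qed
qed

text \<open>For a unit \<open>s\<close> the matrix \<open>[[0,1],[1,0]]\<close> is invertible, with inverse \<open>s\<^sup>-\<^sup>2 [[0,1],[1,0]]\<close>.\<close>

lemma similar_diag_swap:
  assumes s: "s \<in> Units R" and c: "p \<in> carrier R" "u \<in> carrier R"
  shows "similar T (p, \<zero>, \<zero>, u) (u, \<zero>, \<zero>, p)"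
proof -
  have t: "t \<in> Units R" using s by (simp add: t_def)
  have W: "(\<zero>, inv t, inv t, \<zero>) = inv\<^bsub>T\<^esub> (\<zero>, \<one>, \<one>, \<zero>)"
    using t by (intro T.inv_unique') (simp_all add: M2s_carrier M2s_mult M2s_one)
  have "(\<zero>, \<one>, \<one>, \<zero>) \<in> Units T"
    using t by (intro M2s_UnitsI[of _ "(\<zero>, inv t, inv t, \<zero>)"]) (simp_all add: M2s_carrier M2s_mult M2s_one)
  moreover have "(u, \<zero>, \<zero>, p) = (\<zero>, inv t, inv t, \<zero>) \<otimes>\<^bsub>T\<^esub> (p, \<zero>, \<zero>, u) \<otimes>\<^bsub>T\<^esub> (\<zero>, \<one>, \<one>, \<zero>)"
    using t c by (simp add: M2s_mult m_assoc[symmetric])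
  ultimately show ?thesis unfolding similar_def W by blast
qed

subsection \<open>Idempotents\<close>

lemma idem_M2s_eqs:
  assumes c: "a \<in> carrier R" "b \<in> carrier R" "c \<in> carrier R" "d \<in> carrier R"
    and idem: "(a, b, c, d) \<otimes>\<^bsub>T\<^esub> (a, b, c, d) = (a, b, c, d)"
  shows "t \<otimes> (b \<otimes> c) = a \<otimes> (\<one> \<ominus> a)" "b \<otimes> d = (\<one> \<ominus> a) \<otimes> b"
    "d \<otimes> c = c \<otimes> (\<one> \<ominus> a)" "t \<otimes> (c \<otimes> b) = d \<otimes> (\<one> \<ominus> d)"
proof -
  have e: "a \<otimes> a \<oplus> t \<otimes> (b \<otimes> c) = a" "a \<otimes> b \<oplus> b \<otimes> d = b"
    "c \<otimes> a \<oplus> d \<otimes> c = c" "d \<otimes> d \<oplus> t \<otimes> (c \<otimes> b) = d"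
    using idem c by (simp_all add: M2s_mult a_comm)
  show "t \<otimes> (b \<otimes> c) = a \<otimes> (\<one> \<ominus> a)" "b \<otimes> d = (\<one> \<ominus> a) \<otimes> b"
    "d \<otimes> c = c \<otimes> (\<one> \<ominus> a)" "t \<otimes> (c \<otimes> b) = d \<otimes> (\<one> \<ominus> d)"
    using add_eq_imp_eq_minus[OF _ _ e(1)] add_eq_imp_eq_minus[OF _ _ e(2)]
      add_eq_imp_eq_minus[OF _ _ e(3)] add_eq_imp_eq_minus[OF _ _ e(4)] c
    by (simp_all add: a_minus_def l_distr r_distr l_minus r_minus)
qed

text \<open>The matrix \<open>P = [[a, b], [-c, 1 - d]]\<close> intertwines an idempotent \<open>E = [[a, b], [c, d]]\<close> with
  \<open>e\<^sub>1\<^sub>1\<close>: both \<open>P E\<close> and \<open>e\<^sub>1\<^sub>1 P\<close> equal \<open>[[a, b], [0, 0]]\<close>.\<close>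

lemma idem_M2s_intertwine_e11:
  assumes c: "a \<in> carrier R" "b \<in> carrier R" "c \<in> carrier R" "d \<in> carrier R"
    and idem: "(a, b, c, d) \<otimes>\<^bsub>T\<^esub> (a, b, c, d) = (a, b, c, d)"
  shows "(a, b, \<ominus> c, \<one> \<ominus> d) \<otimes>\<^bsub>T\<^esub> (a, b, c, d) = (\<one>, \<zero>, \<zero>, \<zero>) \<otimes>\<^bsub>T\<^esub> (a, b, \<ominus> c, \<one> \<ominus> d)"
proof -
  have e: "a \<otimes> a \<oplus> t \<otimes> (b \<otimes> c) = a" "a \<otimes> b \<oplus> b \<otimes> d = b"
    "c \<otimes> a \<oplus> d \<otimes> c = c" "t \<otimes> (c \<otimes> b) \<oplus> d \<otimes> d = d"
    using idem c by (simp_all add: M2s_mult)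
  have "(\<ominus> c) \<otimes> a \<oplus> (\<one> \<ominus> d) \<otimes> c = c \<ominus> (c \<otimes> a \<oplus> d \<otimes> c)"
    "t \<otimes> ((\<ominus> c) \<otimes> b) \<oplus> (\<one> \<ominus> d) \<otimes> d = d \<ominus> (t \<otimes> (c \<otimes> b) \<oplus> d \<otimes> d)"
    using c by (simp_all add: a_minus_def l_distr r_distr l_minus r_minus minus_add a_ac)
  then have "(\<ominus> c) \<otimes> a \<oplus> (\<one> \<ominus> d) \<otimes> c = \<zero>" "t \<otimes> ((\<ominus> c) \<otimes> b) \<oplus> (\<one> \<ominus> d) \<otimes> d = \<zero>"
    using e(3,4) c by (simp_all add: a_minus_def r_neg)
  then show ?thesis using e(1,2) c by (simp add: M2s_mult)
qed

text \<open>Here \<open>w = s\<^sup>2 b\<close> is a unit because \<open>w c = a (1 - a)\<close> is one, and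
  \<open>w (s\<^sup>2 c a\<inverse> b) = a (1 - a) a\<inverse> w = (1 - a) w = w d\<close>.\<close>

lemma idem_M2s_Schur_eq:
  assumes c: "a \<in> carrier R" "b \<in> carrier R" "c \<in> carrier R" "d \<in> carrier R"
    and idem: "(a, b, c, d) \<otimes>\<^bsub>T\<^esub> (a, b, c, d) = (a, b, c, d)"
    and a: "a \<in> Units R" and a1: "\<one> \<ominus> a \<in> Units R"
  shows "t \<otimes> (c \<otimes> (inv a \<otimes> b)) = d"
proof -
  note f = idem_M2s_eqs[OF c idem]
  define w where "w = t \<otimes> b"
  have ia: "inv a \<in> carrier R" and wc: "w \<in> carrier R" using a c by (simp_all add: w_def)
  have wc_eq: "w \<otimes> c = a \<otimes> (\<one> \<ominus> a)" using f(1) c by (simp add: w_def m_assoc)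
  then have "w \<in> Units R" using Units_of_mult_Units_left[OF wc c(3)] a a1 by simp
  have "a \<otimes> (\<one> \<ominus> a) \<otimes> inv a = (\<one> \<ominus> a) \<otimes> (a \<otimes> inv a)"
    using c ia by (simp add: a_minus_def l_distr r_distr l_minus r_minus m_assoc)
  then have k1: "a \<otimes> (\<one> \<ominus> a) \<otimes> inv a = \<one> \<ominus> a" using a c by simp
  have "(\<one> \<ominus> a) \<otimes> w = t \<otimes> ((\<one> \<ominus> a) \<otimes> b)" using c by (simp add: w_def t_lcomm)
  also have "\<dots> = w \<otimes> d" using c by (simp add: w_def f(2)[symmetric] m_assoc)
  finally have k2: "(\<one> \<ominus> a) \<otimes> w = w \<otimes> d" .
  have "w \<otimes> (c \<otimes> (inv a \<otimes> w)) = (w \<otimes> c) \<otimes> inv a \<otimes> w" using wc c ia by (simp add: m_assoc)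
  also have "\<dots> = w \<otimes> d" using wc_eq k1 k2 by simp
  finally have "c \<otimes> (inv a \<otimes> w) = d" using \<open>w \<in> Units R\<close> wc c ia by simp
  then show ?thesis using c ia by (simp add: w_def t_lcomm)
qed

lemma idem_M2s_Schur_jacobson:
  assumes c: "a \<in> carrier R" "b \<in> carrier R" "c \<in> carrier R" "d \<in> carrier R"
    and idem: "(a, b, c, d) \<otimes>\<^bsub>T\<^esub> (a, b, c, d) = (a, b, c, d)"
    and a: "a \<in> Units R" and a1: "\<one> \<ominus> a \<in> jacobson R" and d: "d \<in> jacobson R"
  shows "t \<otimes> (c \<otimes> (inv a \<otimes> b)) \<in> jacobson R"
proof -
  have ia: "inv a \<in> carrier R" using a by simp
  have "inv a \<otimes> (\<one> \<ominus> a) = inv a \<ominus> \<one>"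
    using a c ia by (simp add: a_minus_def r_distr r_minus)
  then have "inv a \<ominus> \<one> \<in> jacobson R" using jacobson_l_closed[OF ia a1] by simp
  then have "t \<otimes> (c \<otimes> ((inv a \<ominus> \<one>) \<otimes> b)) \<in> jacobson R"
    using c by (simp add: jacobson_l_closed jacobson_r_closed)
  moreover have "t \<otimes> (c \<otimes> b) \<in> jacobson R"
    using idem_M2s_eqs(4)[OF c idem] d c by (simp add: jacobson_r_closed)
  moreover have "t \<otimes> (c \<otimes> (inv a \<otimes> b)) = t \<otimes> (c \<otimes> b) \<oplus> t \<otimes> (c \<otimes> ((inv a \<ominus> \<one>) \<otimes> b))"
    using c ia by (simp add: ring_simprules)
  ultimately show ?thesis by (simp add: jacobson_add_closed)
qed

lemma idem_M2s_one_minus_jacobson: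
  assumes c: "a \<in> carrier R" "b \<in> carrier R" "c \<in> carrier R" "d \<in> carrier R"
    and idem: "(a, b, c, d) \<otimes>\<^bsub>T\<^esub> (a, b, c, d) = (a, b, c, d)"
    and a1: "\<one> \<ominus> a \<in> jacobson R" and d: "d \<in> Units R"
  shows "\<one>\<^bsub>T\<^esub> \<ominus>\<^bsub>T\<^esub> (a, b, c, d) \<in> jacobson T"
proof -
  note f = idem_M2s_eqs[OF c idem]
  have id: "inv d \<in> carrier R" using d by simp
  have "(b \<otimes> d) \<otimes> inv d \<in> jacobson R"
    using f(2) a1 c id by (simp add: jacobson_r_closed)
  then have bJ: "b \<in> jacobson R" using d c id by (simp add: m_assoc)
  have "inv d \<otimes> (d \<otimes> c) \<in> jacobson R"
    using f(3) a1 c id by (simp add: jacobson_l_closed jacobson_r_closed)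
  then have cJ: "c \<in> jacobson R" using d c by (simp add: Units_inv_cancel_left)
  have "inv d \<otimes> (t \<otimes> (c \<otimes> b)) \<in> jacobson R"
    using cJ c id by (simp add: jacobson_l_closed jacobson_r_closed)
  then have d1J: "\<one> \<ominus> d \<in> jacobson R" using f(4) d c by (simp add: Units_inv_cancel_left)
  have "\<one>\<^bsub>T\<^esub> \<ominus>\<^bsub>T\<^esub> (a, b, c, d) = (\<one> \<ominus> a, \<zero> \<ominus> b, \<zero> \<ominus> c, \<one> \<ominus> d)"
    using c by (simp add: M2s_one M2s_minus)
  then show ?thesis
    using a1 bJ cJ d1J by (simp add: jacobson_M2sI jacobson_minus_closed jacobson_zero_closed)
qed

lemma idem_M2s_Units_corner:
  assumes c: "a \<in> carrier R" "b \<in> carrier R" "c \<in> carrier R" "d \<in> carrier R"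
    and idem: "(a, b, c, d) \<otimes>\<^bsub>T\<^esub> (a, b, c, d) = (a, b, c, d)" and a: "a \<in> Units R"
  shows "\<one>\<^bsub>T\<^esub> \<ominus>\<^bsub>T\<^esub> (a, b, c, d) \<in> jacobson T \<or> similar T (a, b, c, d) (\<one>, \<zero>, \<zero>, \<zero>)"
proof -
  have ia: "inv a \<in> carrier R" using a by simp
  have similar_e11: "similar T (a, b, c, d) (\<one>, \<zero>, \<zero>, \<zero>)"
    if S: "(\<one> \<ominus> d) \<oplus> t \<otimes> (c \<otimes> (inv a \<otimes> b)) \<in> Units R"
  proof (rule T.similarI[OF _ _ idem_M2s_intertwine_e11[OF c idem]])
    have "(\<one> \<ominus> d) \<ominus> t \<otimes> ((\<ominus> c) \<otimes> (inv a \<otimes> b)) = (\<one> \<ominus> d) \<oplus> t \<otimes> (c \<otimes> (inv a \<otimes> b))"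
      using c ia by (simp add: a_minus_def l_minus r_minus)
    then show "(a, b, \<ominus> c, \<one> \<ominus> d) \<in> Units T" using M2s_Units_Schur[OF a] c S by simp
  qed (use c in \<open>simp_all add: M2s_carrier\<close>)
  show ?thesis
  proof (cases "\<one> \<ominus> a \<in> jacobson R")
    case False
    then have "\<one> \<ominus> a \<in> Units R" using notin_jacobson_Units c by simp
    then have "t \<otimes> (c \<otimes> (inv a \<otimes> b)) = d" using idem_M2s_Schur_eq[OF c idem a] by simp
    moreover have "(\<one> \<ominus> d) \<oplus> d = \<one>" using c by (simp add: a_minus_def a_assoc l_neg)
    ultimately show ?thesis using similar_e11 by simp
  next
    case a1: True
    show ?thesis
    proof (cases "d \<in> jacobson R")
      case True
      then have "(\<one> \<ominus> d) \<oplus> t \<otimes> (c \<otimes> (inv a \<otimes> b)) \<in> Units R"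
        using idem_M2s_Schur_jacobson[OF c idem a a1] jacobson_one_minus_Units
        by (simp add: Units_add_jacobson)
      then show ?thesis using similar_e11 by simp
    next
      case False
      then show ?thesis
        using idem_M2s_one_minus_jacobson[OF c idem a1] notin_jacobson_Units c by simp
    qed
  qed
qed

lemma idem_M2s_cases:
  assumes E: "E \<in> carrier T" and idem: "E \<otimes>\<^bsub>T\<^esub> E = E"
  shows "E = \<zero>\<^bsub>T\<^esub> \<or> E = \<one>\<^bsub>T\<^esub> \<or> similar T E (\<one>, \<zero>, \<zero>, \<zero>) \<or> similar T E (\<zero>, \<zero>, \<zero>, \<one>)"
proof -
  obtain a b c d where Eq: "E = (a, b, c, d)"
    and c: "a \<in> carrier R" "b \<in> carrier R" "c \<in> carrier R" "d \<in> carrier R"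
    using E by blast
  have zero: "E = \<zero>\<^bsub>T\<^esub>" if "E \<in> jacobson T" using T.jacobson_idem_eq_zero[OF that idem] .
  have one: "E = \<one>\<^bsub>T\<^esub>" if "\<one>\<^bsub>T\<^esub> \<ominus>\<^bsub>T\<^esub> E \<in> jacobson T"
  proof -
    have "\<one>\<^bsub>T\<^esub> \<ominus>\<^bsub>T\<^esub> E = \<zero>\<^bsub>T\<^esub>" using T.jacobson_idem_eq_zero[OF that T.one_minus_idem[OF E idem]] .
    then show ?thesis using T.one_minus_one_minus[OF E] by (simp add: a_minus_def)
  qed
  show ?thesis
  proof (cases "a \<in> jacobson R")
    case False
    then have "a \<in> Units R" using notin_jacobson_Units c by simp
    then show ?thesis using idem_M2s_Units_corner[OF c] idem one Eq by blast
  next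
    case True
    have E': "\<one>\<^bsub>T\<^esub> \<ominus>\<^bsub>T\<^esub> E = (\<one> \<ominus> a, \<zero> \<ominus> b, \<zero> \<ominus> c, \<one> \<ominus> d)"
      using c by (simp add: Eq M2s_one M2s_minus)
    have "(\<one> \<ominus> a, \<zero> \<ominus> b, \<zero> \<ominus> c, \<one> \<ominus> d) \<otimes>\<^bsub>T\<^esub> (\<one> \<ominus> a, \<zero> \<ominus> b, \<zero> \<ominus> c, \<one> \<ominus> d)
        = (\<one> \<ominus> a, \<zero> \<ominus> b, \<zero> \<ominus> c, \<one> \<ominus> d)"
      using T.one_minus_idem[OF E idem] E' by simp
    then have "\<one>\<^bsub>T\<^esub> \<ominus>\<^bsub>T\<^esub> (\<one> \<ominus> a, \<zero> \<ominus> b, \<zero> \<ominus> c, \<one> \<ominus> d) \<in> jacobson T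
        \<or> similar T (\<one> \<ominus> a, \<zero> \<ominus> b, \<zero> \<ominus> c, \<one> \<ominus> d) (\<one>, \<zero>, \<zero>, \<zero>)"
      using c jacobson_one_minus_Units[OF True] by (intro idem_M2s_Units_corner) simp_all
    then have cases': "E \<in> jacobson T \<or> similar T (\<one>\<^bsub>T\<^esub> \<ominus>\<^bsub>T\<^esub> E) (\<one>, \<zero>, \<zero>, \<zero>)"
      unfolding E'[symmetric] T.one_minus_one_minus[OF E] .
    have "\<one>\<^bsub>T\<^esub> \<ominus>\<^bsub>T\<^esub> (\<one>, \<zero>, \<zero>, \<zero>) = (\<one> \<ominus> \<one>, \<zero> \<ominus> \<zero>, \<zero> \<ominus> \<zero>, \<one> \<ominus> \<zero>)"
      by (simp add: M2s_one M2s_minus)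
    then have e22: "\<one>\<^bsub>T\<^esub> \<ominus>\<^bsub>T\<^esub> (\<one>, \<zero>, \<zero>, \<zero>) = (\<zero>, \<zero>, \<zero>, \<one>)"
      by (simp add: a_minus_def r_neg)
    have "similar T E (\<zero>, \<zero>, \<zero>, \<one>)" if "similar T (\<one>\<^bsub>T\<^esub> \<ominus>\<^bsub>T\<^esub> E) (\<one>, \<zero>, \<zero>, \<zero>)"
      using T.similar_one_minus[OF _ that] T.one_minus_one_minus[OF E] E e22 by simp
    then show ?thesis using cases' zero by blast
  qed
qed

subsection \<open>Strongly J-clean matrices\<close>

lemma strongly_J_clean_diag:
  assumes v: "v \<in> carrier R" "v \<ominus> \<one> \<in> jacobson R" and w: "w \<in> jacobson R"
  shows "strongly_J_clean T (v, \<zero>, \<zero>, w)" "strongly_J_clean T (w, \<zero>, \<zero>, v)"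
proof -
  have wc: "w \<in> carrier R" using w jacobson_subset by blast
  have J0: "\<zero> \<ominus> \<zero> \<in> jacobson R" and Jw: "w \<ominus> \<zero> \<in> jacobson R"
    using w by (simp_all add: jacobson_minus_closed jacobson_zero_closed)
  have "(v, \<zero>, \<zero>, w) \<ominus>\<^bsub>T\<^esub> (\<one>, \<zero>, \<zero>, \<zero>) \<in> jacobson T"
    using v wc J0 Jw by (simp add: M2s_minus jacobson_M2sI)
  moreover have "(v, \<zero>, \<zero>, w) \<otimes>\<^bsub>T\<^esub> (\<one>, \<zero>, \<zero>, \<zero>) = (\<one>, \<zero>, \<zero>, \<zero>) \<otimes>\<^bsub>T\<^esub> (v, \<zero>, \<zero>, w)"
    "(\<one>, \<zero>, \<zero>, \<zero>) \<otimes>\<^bsub>T\<^esub> (\<one>, \<zero>, \<zero>, \<zero>) = (\<one>, \<zero>, \<zero>, \<zero>)"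
    using v wc by (simp_all add: M2s_mult)
  ultimately show "strongly_J_clean T (v, \<zero>, \<zero>, w)"
    unfolding strongly_J_clean_def by (force simp: M2s_carrier)
  have "(w, \<zero>, \<zero>, v) \<ominus>\<^bsub>T\<^esub> (\<zero>, \<zero>, \<zero>, \<one>) \<in> jacobson T"
    using v wc J0 Jw by (simp add: M2s_minus jacobson_M2sI)
  moreover have "(w, \<zero>, \<zero>, v) \<otimes>\<^bsub>T\<^esub> (\<zero>, \<zero>, \<zero>, \<one>) = (\<zero>, \<zero>, \<zero>, \<one>) \<otimes>\<^bsub>T\<^esub> (w, \<zero>, \<zero>, v)"
    "(\<zero>, \<zero>, \<zero>, \<one>) \<otimes>\<^bsub>T\<^esub> (\<zero>, \<zero>, \<zero>, \<one>) = (\<zero>, \<zero>, \<zero>, \<one>)"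
    using v wc by (simp_all add: M2s_mult)
  ultimately show "strongly_J_clean T (w, \<zero>, \<zero>, v)"
    unfolding strongly_J_clean_def by (force simp: M2s_carrier)
qed

lemma strongly_J_clean_if_similar_diag:
  assumes A: "A \<in> carrier T" and v: "v \<in> carrier R" "v \<ominus> \<one> \<in> jacobson R" and w: "w \<in> jacobson R"
    and sim: "similar T A (v, \<zero>, \<zero>, w) \<or> similar T A (w, \<zero>, \<zero>, v)"
  shows "strongly_J_clean T A"
proof -
  have "strongly_J_clean T (v, \<zero>, \<zero>, w)" "strongly_J_clean T (w, \<zero>, \<zero>, v)"
    using strongly_J_clean_diag[OF v w] by auto
  then show ?thesis using sim T.strongly_J_clean_similar[OF A] by auto
qed

lemma diag_if_commute_e11:
  assumes B: "B \<in> carrier T" and comm: "B \<otimes>\<^bsub>T\<^esub> (\<one>, \<zero>, \<zero>, \<zero>) = (\<one>, \<zero>, \<zero>, \<zero>) \<otimes>\<^bsub>T\<^esub> B"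
    and BJ: "B \<ominus>\<^bsub>T\<^esub> (\<one>, \<zero>, \<zero>, \<zero>) \<in> jacobson T"
  shows "\<exists>v w. B = (v, \<zero>, \<zero>, w) \<and> v \<in> carrier R \<and> v \<ominus> \<one> \<in> jacobson R \<and> w \<in> jacobson R"
proof -
  obtain p q r u where B: "B = (p, q, r, u)"
    and c: "p \<in> carrier R" "q \<in> carrier R" "r \<in> carrier R" "u \<in> carrier R"
    using assms(1) by blast
  have qr: "q = \<zero>" "r = \<zero>" using comm c by (simp_all add: B M2s_mult)
  have "(p \<ominus> \<one>, \<zero> \<ominus> \<zero>, \<zero> \<ominus> \<zero>, u \<ominus> \<zero>) \<in> jacobson T"
    using BJ c by (simp add: B qr M2s_minus)
  then have "p \<ominus> \<one> \<in> jacobson R" "u \<ominus> \<zero> \<in> jacobson R" by (rule jacobson_M2sD)+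
  then show ?thesis using B qr c by (auto simp: a_minus_def)
qed

lemma diag_if_commute_e22:
  assumes B: "B \<in> carrier T" and comm: "B \<otimes>\<^bsub>T\<^esub> (\<zero>, \<zero>, \<zero>, \<one>) = (\<zero>, \<zero>, \<zero>, \<one>) \<otimes>\<^bsub>T\<^esub> B"
    and BJ: "B \<ominus>\<^bsub>T\<^esub> (\<zero>, \<zero>, \<zero>, \<one>) \<in> jacobson T"
  shows "\<exists>v w. B = (w, \<zero>, \<zero>, v) \<and> v \<in> carrier R \<and> v \<ominus> \<one> \<in> jacobson R \<and> w \<in> jacobson R"
proof -
  obtain p q r u where B: "B = (p, q, r, u)"
    and c: "p \<in> carrier R" "q \<in> carrier R" "r \<in> carrier R" "u \<in> carrier R"
    using assms(1) by blast
  have qr: "q = \<zero>" "r = \<zero>" using comm c by (simp_all add: B M2s_mult)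
  have "(p \<ominus> \<zero>, \<zero> \<ominus> \<zero>, \<zero> \<ominus> \<zero>, u \<ominus> \<one>) \<in> jacobson T"
    using BJ c by (simp add: B qr M2s_minus)
  then have "p \<ominus> \<zero> \<in> jacobson R" "u \<ominus> \<one> \<in> jacobson R" by (rule jacobson_M2sD)+
  then show ?thesis using B qr c by (auto simp: a_minus_def)
qed

lemma similar_diag_if_idem_similar_e11:
  assumes "A \<in> carrier T" "e \<in> carrier T" "A \<otimes>\<^bsub>T\<^esub> e = e \<otimes>\<^bsub>T\<^esub> A" "A \<ominus>\<^bsub>T\<^esub> e \<in> jacobson T"
    and "similar T e (\<one>, \<zero>, \<zero>, \<zero>)"
  shows "\<exists>v w. v \<in> carrier R \<and> v \<ominus> \<one> \<in> jacobson R \<and> w \<in> jacobson R \<and> similar T A (v, \<zero>, \<zero>, w)"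
  using T.strongly_J_clean_idem_similar[OF assms] diag_if_commute_e11 by metis

lemma similar_diag_if_idem_similar_e22:
  assumes "A \<in> carrier T" "e \<in> carrier T" "A \<otimes>\<^bsub>T\<^esub> e = e \<otimes>\<^bsub>T\<^esub> A" "A \<ominus>\<^bsub>T\<^esub> e \<in> jacobson T"
    and "similar T e (\<zero>, \<zero>, \<zero>, \<one>)"
  shows "\<exists>v w. v \<in> carrier R \<and> v \<ominus> \<one> \<in> jacobson R \<and> w \<in> jacobson R \<and> similar T A (w, \<zero>, \<zero>, v)"
  using T.strongly_J_clean_idem_similar[OF assms] diag_if_commute_e22 by metis

lemma strongly_J_clean_M2sD:
  assumes A: "A \<in> carrier T" and clean: "strongly_J_clean T A"
  shows "A \<in> jacobson T \<or> \<one>\<^bsub>T\<^esub> \<ominus>\<^bsub>T\<^esub> A \<in> jacobson T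
    \<or> (\<exists>v w. v \<in> carrier R \<and> v \<ominus> \<one> \<in> jacobson R \<and> w \<in> jacobson R \<and> similar T A (v, \<zero>, \<zero>, w))
    \<or> (\<exists>v w. v \<in> carrier R \<and> v \<ominus> \<one> \<in> jacobson R \<and> w \<in> jacobson R \<and> similar T A (w, \<zero>, \<zero>, v))"
proof -
  obtain e where e: "e \<in> carrier T" "e \<otimes>\<^bsub>T\<^esub> e = e" "A \<otimes>\<^bsub>T\<^esub> e = e \<otimes>\<^bsub>T\<^esub> A" "A \<ominus>\<^bsub>T\<^esub> e \<in> jacobson T"
    using clean unfolding strongly_J_clean_def by blast
  consider "e = \<zero>\<^bsub>T\<^esub>" | "e = \<one>\<^bsub>T\<^esub>"
    | "similar T e (\<one>, \<zero>, \<zero>, \<zero>)" | "similar T e (\<zero>, \<zero>, \<zero>, \<one>)"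
    using idem_M2s_cases[OF e(1,2)] by blast
  then show ?thesis
  proof cases
    case 1
    then show ?thesis using e(4) A by (simp add: a_minus_def)
  next
    case 2
    then show ?thesis using T.jacobson_minus_commute[OF A _ e(4)] by simp
  next
    case 3
    then show ?thesis using similar_diag_if_idem_similar_e11[OF A e(1,3,4)] by blast
  next
    case 4
    then show ?thesis using similar_diag_if_idem_similar_e22[OF A e(1,3,4)] by blast
  qed
qed

end

theorem lemma2p8:
  fixes R :: "('a, 'b) ring_scheme" and s :: 'a and A :: "'a \<times> 'a \<times> 'a \<times> 'a"
  assumes "local_ring R"
    and "central R s"
    and "A \<in> carrier (M2s R s)"
  shows "strongly_J_clean (M2s R s) A \<longleftrightarrow>
    (A \<in> jacobson (M2s R s)
     \<or> \<one>\<^bsub>M2s R s\<^esub> \<ominus>\<^bsub>M2s R s\<^esub> A \<in> jacobson (M2s R s)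
     \<or> (s \<in> Units R \<and>
        (\<exists>v w. v \<in> carrier R \<and> v \<ominus>\<^bsub>R\<^esub> \<one>\<^bsub>R\<^esub> \<in> jacobson R \<and> w \<in> jacobson R \<and>
           similar (M2s R s) A (v, \<zero>\<^bsub>R\<^esub>, \<zero>\<^bsub>R\<^esub>, w)))
     \<or> (s \<in> jacobson R \<and>
        (\<exists>v w. v \<in> carrier R \<and> v \<ominus>\<^bsub>R\<^esub> \<one>\<^bsub>R\<^esub> \<in> jacobson R \<and> w \<in> jacobson R \<and>
           (similar (M2s R s) A (v, \<zero>\<^bsub>R\<^esub>, \<zero>\<^bsub>R\<^esub>, w) \<or>
            similar (M2s R s) A (w, \<zero>\<^bsub>R\<^esub>, \<zero>\<^bsub>R\<^esub>, v)))))"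
proof -
  interpret M2s_local R s
    using assms(1,2)
    by (simp add: M2s_local_def M2s_ring_def M2s_ring_axioms_def ring_local_def ring_local_axioms_def
        local_ring_def)
  note A = assms(3)
  let "?clean \<longleftrightarrow> ?J \<or> ?J1 \<or> ?unit \<or> ?rad" = ?thesis
  have s: "s \<in> jacobson R \<or> s \<in> Units R" using notin_jacobson_Units s_closed by blast
  have swap: "similar T A (v, \<zero>\<^bsub>R\<^esub>, \<zero>\<^bsub>R\<^esub>, w)"
    if "s \<in> Units R" "v \<in> carrier R" "w \<in> jacobson R" "similar T A (w, \<zero>\<^bsub>R\<^esub>, \<zero>\<^bsub>R\<^esub>, v)" for v w
    using T.similar_trans[OF A that(4) similar_diag_swap[OF that(1)]] jacobson_subset that by auto
  show ?thesis
  proof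
    assume ?clean
    with strongly_J_clean_M2sD[OF A] show "?J \<or> ?J1 \<or> ?unit \<or> ?rad"
      using s swap by blast
  next
    assume "?J \<or> ?J1 \<or> ?unit \<or> ?rad"
    then show ?clean
      using strongly_J_clean_if_similar_diag[OF A] T.strongly_J_clean_if_jacobson
        T.strongly_J_clean_if_one_minus_jacobson[OF A]
      by blast
  qed
qed

end
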